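(* Let $\alpha: I\to M$ be a unit-speed curve on an oriented surface $M\subset E^3$ with Darboux frame $\{T,V,U\}$ and curvatures $k_g,k_n,\tau_g$. Consider the curve $\gamma$ defined in either of the following two cases: (a) $k_g\equiv0$ and $k_n,\tau_g$ nowhere zero on $I$, and $\gamma(s)=\alpha(s)+\frac{k_n'(s)}{k_n(s)^2\tau_g(s)}V(s)+\frac{1}{k_n(s)}U(s)$; (b) $k_g$ nowhere zero on $I$, $c_3$ a real constant, $\psi$ an antiderivative of $k_n\tau_g/k_g$, $\Phi$ an antiderivative of $e^{-\psi}\tau_g/k_g$, and $$\gamma(s)=\alpha(s)+\Big(\frac{k_n}{k_g}e^{\psi}(\Phi-c_3)+\frac{1}{k_g}\Big)(s)\,V(s)+\big(e^{\psi}(c_3-\Phi)\big)(s)\,U(s).$$ In either case assume $\gamma$ is regular. Then $\gamma$ is a general helix if and only if $\alpha$ is a relatively normal-slant helix on $M$.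
   Context: $M$ is an oriented surface in Euclidean 3-space $E^3$ and $\alpha:I\to M$ is a unit-speed curve with arc-length parameter $s$. Its Darboux frame $\{T,V,U\}$ consists of the unit tangent $T=\alpha'$, the unit surface normal $U$ of $M$ along $\alpha$, and $V=U\times T$; it satisfies $T'=k_gV+k_nU$, $V'=-k_gT+\tau_gU$, $U'=-k_nT-\tau_gV$, where $k_g,k_n,\tau_g$ are the geodesic curvature, normal curvature and geodesic torsion. A regular curve is a general helix if its unit tangent makes a constant angle with a fixed direction. $\alpha$ is a relatively normal-slant helix if $\langle V,d\rangle$ is constant for some fixed unit vector $d$. *)

theory Defs
  imports "HOL-Analysis.Analysis"
begin

type_synonym vec3 = "real ^ 3"

definition darboux_frame ::
  "real set \<Rightarrow> (real \<Rightarrow> vec3) \<Rightarrow> (real \<Rightarrow> vec3) \<Rightarrow> (real \<Rightarrow> vec3) \<Rightarrow> (real \<Rightarrow> vec3)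
   \<Rightarrow> (real \<Rightarrow> real) \<Rightarrow> (real \<Rightarrow> real) \<Rightarrow> (real \<Rightarrow> real) \<Rightarrow> bool" where
  "darboux_frame I \<alpha> T V U kg kn tg \<longleftrightarrow>
     (\<forall>s\<in>I.
        (\<alpha> has_vector_derivative T s) (at s) \<and>
        norm (T s) = 1 \<and> norm (U s) = 1 \<and> T s \<bullet> U s = 0 \<and>
        V s = cross3 (U s) (T s) \<and>
        (T has_vector_derivative (kg s *\<^sub>R V s + kn s *\<^sub>R U s)) (at s) \<and>
        (V has_vector_derivative (- kg s *\<^sub>R T s + tg s *\<^sub>R U s)) (at s) \<and>
        (U has_vector_derivative (- kn s *\<^sub>R T s - tg s *\<^sub>R V s)) (at s))"

definition regular_curve :: "real set \<Rightarrow> (real \<Rightarrow> vec3) \<Rightarrow> bool" where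
  "regular_curve I \<gamma> \<longleftrightarrow>
     (\<forall>s\<in>I. \<gamma> differentiable (at s) \<and> vector_derivative \<gamma> (at s) \<noteq> 0)"

definition general_helix :: "real set \<Rightarrow> (real \<Rightarrow> vec3) \<Rightarrow> bool" where
  "general_helix I \<gamma> \<longleftrightarrow> regular_curve I \<gamma> \<and>
     (\<exists>d c. norm d = 1 \<and>
        (\<forall>s\<in>I. (vector_derivative \<gamma> (at s) /\<^sub>R norm (vector_derivative \<gamma> (at s))) \<bullet> d = c))"

definition rel_normal_slant_helix :: "real set \<Rightarrow> (real \<Rightarrow> vec3) \<Rightarrow> bool" where
  "rel_normal_slant_helix I V \<longleftrightarrow> (\<exists>d c. norm d = 1 \<and> (\<forall>s\<in>I. V s \<bullet> d = c))"

end

theory Submission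
  imports Defs
begin

text \<open>In both cases \<open>\<gamma> = \<alpha> + A V + B U\<close> with \<open>A k\<^sub>g + B k\<^sub>n = 1\<close> and \<open>A \<tau>\<^sub>g + B' = 0\<close>.
  Differentiating with the Darboux equations, these two relations kill the \<open>T\<close>- and
  \<open>U\<close>-components of \<open>\<gamma>'\<close>, so \<open>\<gamma>' = f V\<close> with \<open>f\<close> nowhere zero by regularity. Nothing
  makes \<open>f\<close> continuous, but \<open>f\<close> cannot change sign: near any \<open>a\<close>, \<open>f (V \<bullet> V a)\<close> is the
  derivative of \<open>\<gamma> \<bullet> V a\<close>, and a nowhere vanishing derivative has constant sign. Hence
  the unit tangent of \<open>\<gamma>\<close> is \<open>\<sigma> V\<close> for a fixed \<open>\<sigma> = \<plusminus>1\<close>, and \<open>\<gamma>\<close> makes a constant angle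
  with a direction \<open>d\<close> exactly when \<open>V\<close> does.\<close>

lemma nonvanishing_derivative_same_sign:
  fixes h h' :: "real \<Rightarrow> real"
  assumes S: "open S" "is_interval S"
    and der: "\<And>x. x \<in> S \<Longrightarrow> (h has_real_derivative h' x) (at x)"
    and nz: "\<And>x. x \<in> S \<Longrightarrow> h' x \<noteq> 0"
    and xy: "x \<in> S" "y \<in> S"
  shows "h' x > 0 \<longleftrightarrow> h' y > 0"
proof -
  have cont: "continuous_on S h"
    by (rule continuous_at_imp_continuous_on) (use der DERIV_isCont in blast)
  have "inj_on h S"
  proof (rule linorder_inj_onI')
    fix x y assume xy: "x \<in> S" "y \<in> S" "x < y"
    have sub: "{x..y} \<subseteq> S"
      using S(2) xy unfolding is_interval_1 by (meson atLeastAtMost_iff subsetI)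
    have diff: "h differentiable (at z)" if "x < z" "z < y" for z
    proof -
      have "z \<in> S" using sub that by auto
      then show ?thesis using der real_differentiable_def by blast
    qed
    show "h x \<noteq> h y"
    proof
      assume "h x = h y"
      then obtain z where z: "x < z" "z < y" "(h has_real_derivative 0) (at z)"
        using Rolle[OF \<open>x < y\<close> _ continuous_on_subset[OF cont sub] diff] by blast
      then have "z \<in> S" using sub by auto
      then show False
        using DERIV_unique[OF der z(3)] nz by simp
    qed
  qed
  then have "strict_mono_on S h \<or> strict_antimono_on S h"
    using injective_eq_monotone_map[OF S(2) cont] by blast
  then have "(\<forall>x\<in>S. h' x > 0) \<or> (\<forall>x\<in>S. h' x < 0)"
  proof
    assume "strict_mono_on S h"
    then have "h' x \<ge> 0" if "x \<in> S" for x
      using mono_on_imp_deriv_nonneg[OF strict_mono_on_imp_mono_on der[OF that]] that S(1)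
      by (simp add: interior_open)
    then show ?thesis using nz by force
  next
    assume "strict_antimono_on S h"
    then have "mono_on S (\<lambda>x. - h x)"
      by (auto simp: monotone_on_def order_le_less)
    then have "- h' x \<ge> 0" if "x \<in> S" for x
      using mono_on_imp_deriv_nonneg[OF _ DERIV_minus[OF der[OF that]]] that S(1)
      by (simp add: interior_open)
    then show ?thesis using nz by force
  qed
  then show ?thesis
    using xy by auto
qed

lemma derivative_along_unit_field_sign_constant:
  fixes \<gamma> V :: "real \<Rightarrow> 'a::real_inner" and f :: "real \<Rightarrow> real"
  assumes I: "open I" "connected I"
    and V_cont: "continuous_on I V"
    and V_unit: "\<And>s. s \<in> I \<Longrightarrow> norm (V s) = 1"
    and \<gamma>': "\<And>s. s \<in> I \<Longrightarrow> (\<gamma> has_vector_derivative f s *\<^sub>R V s) (at s)"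
    and f: "\<And>s. s \<in> I \<Longrightarrow> f s \<noteq> 0"
  shows "(\<forall>s\<in>I. f s > 0) \<or> (\<forall>s\<in>I. f s < 0)"
proof -
  have "(\<lambda>s. f s > 0) constant_on I"
  proof (rule locally_constant_imp_constant[OF I(2)])
    fix a assume a: "a \<in> I"
    define W where "W = I \<inter> V -` {v. V a \<bullet> v > 0}"
    have "open W"
      unfolding W_def by (rule continuous_open_preimage[OF V_cont I(1) open_halfspace_gt])
    moreover have "a \<in> W"
      using a V_unit[OF a] by (simp add: W_def dot_square_norm)
    ultimately obtain e where e: "e > 0" "ball a e \<subseteq> W"
      by (meson openE)
    have ball: "t \<in> I" "V t \<bullet> V a > 0" if "t \<in> ball a e" for t
      using e(2) that by (auto simp: W_def inner_commute)
    have a_ball: "a \<in> ball a e"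
      using e(1) by simp
    have "f t > 0 \<longleftrightarrow> f a > 0" if t: "t \<in> ball a e" for t
    proof -
      have "f t > 0 \<longleftrightarrow> f t * (V t \<bullet> V a) > 0"
        using ball[OF t] by (simp add: zero_less_mult_iff)
      also have "\<dots> \<longleftrightarrow> f a * (V a \<bullet> V a) > 0"
      proof (rule nonvanishing_derivative_same_sign[OF open_ball is_interval_ball_real _ _ t a_ball])
        fix u assume "u \<in> ball a e"
        note u = ball[OF this]
        show "((\<lambda>t. \<gamma> t \<bullet> V a) has_real_derivative f u * (V u \<bullet> V a)) (at u)"
          using bounded_linear.has_vector_derivative[OF bounded_linear_inner_left \<gamma>'[OF u(1)]]
          by (simp add: has_real_derivative_iff_has_vector_derivative)
        show "f u * (V u \<bullet> V a) \<noteq> 0"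
          using f[OF u(1)] u(2) by simp
      qed
      also have "\<dots> \<longleftrightarrow> f a > 0"
        using V_unit[OF a] by (simp add: dot_square_norm)
      finally show ?thesis .
    qed
    moreover have "ball a e \<subseteq> I"
      using ball(1) by (rule subsetI)
    ultimately show "\<exists>T. openin (top_of_set I) T \<and> a \<in> T \<and> (\<forall>t\<in>T. f t > 0 \<longleftrightarrow> f a > 0)"
      using open_openin_trans[OF I(1) open_ball] a_ball by blast
  qed
  then obtain p where "\<And>s. s \<in> I \<Longrightarrow> f s > 0 \<longleftrightarrow> p"
    unfolding constant_on_def by blast
  then show ?thesis
    using f by (cases p) (auto simp: linorder_neq_iff)
qed

lemma unit_tangent_eq_signed_field:
  fixes \<gamma> V :: "real \<Rightarrow> 'a::real_inner" and f :: "real \<Rightarrow> real"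
  assumes I: "open I" "connected I"
    and V_cont: "continuous_on I V"
    and V_unit: "\<And>s. s \<in> I \<Longrightarrow> norm (V s) = 1"
    and \<gamma>': "\<And>s. s \<in> I \<Longrightarrow> (\<gamma> has_vector_derivative f s *\<^sub>R V s) (at s)"
    and f: "\<And>s. s \<in> I \<Longrightarrow> f s \<noteq> 0"
  obtains \<sigma> where "\<bar>\<sigma>\<bar> = 1"
    and "\<And>s. s \<in> I \<Longrightarrow>
      vector_derivative \<gamma> (at s) /\<^sub>R norm (vector_derivative \<gamma> (at s)) = \<sigma> *\<^sub>R V s"
proof -
  have unit_tangent: "vector_derivative \<gamma> (at s) /\<^sub>R norm (vector_derivative \<gamma> (at s))
      = sgn (f s) *\<^sub>R V s" if s: "s \<in> I" for s
    using vector_derivative_at[OF \<gamma>'[OF s]] V_unit[OF s] by (simp add: sgn_real_def)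
  from derivative_along_unit_field_sign_constant[OF I V_cont V_unit \<gamma>' f]
  consider "\<forall>s\<in>I. f s > 0" | "\<forall>s\<in>I. f s < 0"
    by blast
  then show thesis
  proof cases
    case 1
    then show thesis using that[of 1] unit_tangent by simp
  next
    case 2
    then show thesis using that[of "-1"] unit_tangent by simp
  qed
qed

lemma general_helix_iff_rel_normal_slant_helix_if_unit_tangent:
  assumes reg: "regular_curve I \<gamma>" and \<sigma>: "\<bar>\<sigma>\<bar> = 1"
    and tangent: "\<And>s. s \<in> I \<Longrightarrow>
      vector_derivative \<gamma> (at s) /\<^sub>R norm (vector_derivative \<gamma> (at s)) = \<sigma> *\<^sub>R V s"
  shows "general_helix I \<gamma> \<longleftrightarrow> rel_normal_slant_helix I V"
proof -
  have \<sigma>\<sigma>: "\<sigma> * \<sigma> = 1"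
    using \<sigma> by (metis abs_mult_self_eq mult_1_right)
  have "(\<exists>c. \<forall>s\<in>I. (\<sigma> *\<^sub>R V s) \<bullet> d = c) \<longleftrightarrow> (\<exists>c. \<forall>s\<in>I. V s \<bullet> d = c)" for d
  proof
    assume "\<exists>c. \<forall>s\<in>I. (\<sigma> *\<^sub>R V s) \<bullet> d = c"
    then obtain c where "\<forall>s\<in>I. \<sigma> * (V s \<bullet> d) = c" by auto
    then have "\<forall>s\<in>I. V s \<bullet> d = \<sigma> * c"
      by (metis \<sigma>\<sigma> mult.assoc mult_1)
    then show "\<exists>c. \<forall>s\<in>I. V s \<bullet> d = c" ..
  next
    assume "\<exists>c. \<forall>s\<in>I. V s \<bullet> d = c"
    then obtain c where "\<forall>s\<in>I. V s \<bullet> d = c" ..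
    then have "\<forall>s\<in>I. (\<sigma> *\<^sub>R V s) \<bullet> d = \<sigma> * c" by simp
    then show "\<exists>c. \<forall>s\<in>I. (\<sigma> *\<^sub>R V s) \<bullet> d = c" ..
  qed
  then show ?thesis
    using reg tangent by (simp add: general_helix_def rel_normal_slant_helix_def)
qed

lemma darboux_frame_V_orthonormal:
  assumes frame: "darboux_frame I \<alpha> T V U kg kn tg" and s: "s \<in> I"
  shows "norm (V s) = 1" "V s \<bullet> T s = 0" "V s \<bullet> U s = 0"
proof -
  have TU: "norm (T s) = 1" "norm (U s) = 1" "T s \<bullet> U s = 0" and V: "V s = cross3 (U s) (T s)"
    using frame s unfolding darboux_frame_def by auto
  have "(norm (V s))\<^sup>2 = (norm (U s) * norm (T s))\<^sup>2 - (U s \<bullet> T s)\<^sup>2"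
    using norm_cross_dot[of "U s" "T s"] V by simp
  then have "(norm (V s))\<^sup>2 = 1"
    using TU by (simp add: inner_commute)
  then show "norm (V s) = 1"
    using norm_ge_zero[of "V s"] by (auto simp: power2_eq_1_iff)
  show "V s \<bullet> T s = 0" "V s \<bullet> U s = 0"
    using V dot_cross_self by (simp_all add: inner_commute)
qed

lemma darboux_frame_continuous_on_V:
  assumes "darboux_frame I \<alpha> T V U kg kn tg"
  shows "continuous_on I V"
  using assms unfolding darboux_frame_def
  by (meson continuous_at_imp_continuous_on has_vector_derivative_continuous)

lemma darboux_frame_offset_has_vector_derivative:
  fixes A B :: "real \<Rightarrow> real"
  assumes frame: "darboux_frame I \<alpha> T V U kg kn tg" and s: "s \<in> I"
    and A: "(A has_real_derivative A') (at s)" and B: "(B has_real_derivative B') (at s)"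
  shows "((\<lambda>t. \<alpha> t + A t *\<^sub>R V t + B t *\<^sub>R U t) has_vector_derivative
      (1 - A s * kg s - B s * kn s) *\<^sub>R T s + (A' - B s * tg s) *\<^sub>R V s
        + (A s * tg s + B') *\<^sub>R U s) (at s)"
proof -
  have "(\<alpha> has_vector_derivative T s) (at s)"
    "(V has_vector_derivative (- kg s *\<^sub>R T s + tg s *\<^sub>R U s)) (at s)"
    "(U has_vector_derivative (- kn s *\<^sub>R T s - tg s *\<^sub>R V s)) (at s)"
    using frame s unfolding darboux_frame_def by auto
  then have "((\<lambda>t. \<alpha> t + A t *\<^sub>R V t + B t *\<^sub>R U t) has_vector_derivative
      T s + (A s *\<^sub>R (- kg s *\<^sub>R T s + tg s *\<^sub>R U s) + A' *\<^sub>R V s)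
        + (B s *\<^sub>R (- kn s *\<^sub>R T s - tg s *\<^sub>R V s) + B' *\<^sub>R U s)) (at s)"
    by (intro derivative_intros A B)
  then show ?thesis
    by (rule has_vector_derivative_eq_rhs) (simp add: algebra_simps)
qed

lemma darboux_offset_curve_derivative_along_V:
  fixes \<alpha> T V U \<gamma> :: "real \<Rightarrow> vec3" and A B B' kg kn tg :: "real \<Rightarrow> real"
  assumes I: "open I" and frame: "darboux_frame I \<alpha> T V U kg kn tg"
    and B: "\<And>s. s \<in> I \<Longrightarrow> (B has_real_derivative B' s) (at s)"
    and \<gamma>_eq: "\<And>s. s \<in> I \<Longrightarrow> \<gamma> s = \<alpha> s + A s *\<^sub>R V s + B s *\<^sub>R U s"
    and T_coeff: "\<And>s. s \<in> I \<Longrightarrow> A s * kg s + B s * kn s = 1"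
    and U_coeff: "\<And>s. s \<in> I \<Longrightarrow> A s * tg s + B' s = 0"
    and \<gamma>_diff: "\<gamma> differentiable (at s)" and s: "s \<in> I"
  shows "(\<gamma> has_vector_derivative (vector_derivative \<gamma> (at s) \<bullet> V s) *\<^sub>R V s) (at s)"
proof -
  have frame_s: "(\<alpha> has_vector_derivative T s) (at s)"
    "(V has_vector_derivative (- kg s *\<^sub>R T s + tg s *\<^sub>R U s)) (at s)"
    "(U has_vector_derivative (- kn s *\<^sub>R T s - tg s *\<^sub>R V s)) (at s)"
    using frame s unfolding darboux_frame_def by auto
  have A_eq: "A t = (\<gamma> t - \<alpha> t - B t *\<^sub>R U t) \<bullet> V t" if "t \<in> I" for t
    using darboux_frame_V_orthonormal[OF frame that] \<gamma>_eq[OF that]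
    by (simp add: inner_add_left inner_diff_left inner_commute dot_square_norm)
  \<comment> \<open>\<open>A\<close> itself is not assumed differentiable; it inherits this from \<open>\<gamma>\<close>.\<close>
  have "((\<lambda>t. \<gamma> t - \<alpha> t - B t *\<^sub>R U t) has_vector_derivative
      vector_derivative \<gamma> (at s) - T s - (B s *\<^sub>R (- kn s *\<^sub>R T s - tg s *\<^sub>R V s) + B' s *\<^sub>R U s)) (at s)"
    using \<gamma>_diff by (intro derivative_intros frame_s B[OF s]) (simp add: vector_derivative_works)
  from bounded_bilinear.has_vector_derivative[OF bounded_bilinear_inner this frame_s(2)]
  obtain A' where "((\<lambda>t. (\<gamma> t - \<alpha> t - B t *\<^sub>R U t) \<bullet> V t) has_real_derivative A') (at s)"
    unfolding has_real_derivative_iff_has_vector_derivative by blast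
  then have A: "(A has_real_derivative A') (at s)"
    by (rule has_field_derivative_transform_within_open[OF _ I s]) (simp add: A_eq)
  have "1 - A s * kg s - B s * kn s = 0" "A s * tg s + B' s = 0"
    using T_coeff[OF s] U_coeff[OF s] by simp_all
  then have "((\<lambda>t. \<alpha> t + A t *\<^sub>R V t + B t *\<^sub>R U t) has_vector_derivative (A' - B s * tg s) *\<^sub>R V s) (at s)"
    using darboux_frame_offset_has_vector_derivative[OF frame s A B[OF s]] by simp
  then have \<gamma>': "(\<gamma> has_vector_derivative (A' - B s * tg s) *\<^sub>R V s) (at s)"
    by (rule has_vector_derivative_transform_within_open[OF _ I s]) (simp add: \<gamma>_eq)
  moreover have "vector_derivative \<gamma> (at s) \<bullet> V s = A' - B s * tg s"
    using vector_derivative_at[OF \<gamma>'] darboux_frame_V_orthonormal(1)[OF frame s]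
    by (simp add: dot_square_norm)
  ultimately show ?thesis
    by simp
qed

lemma general_helix_iff_rel_normal_slant_helix_if_offset:
  fixes \<alpha> T V U \<gamma> :: "real \<Rightarrow> vec3" and A B B' kg kn tg :: "real \<Rightarrow> real"
  assumes I: "open I" "is_interval I" and frame: "darboux_frame I \<alpha> T V U kg kn tg"
    and B: "\<And>s. s \<in> I \<Longrightarrow> (B has_real_derivative B' s) (at s)"
    and \<gamma>_eq: "\<And>s. s \<in> I \<Longrightarrow> \<gamma> s = \<alpha> s + A s *\<^sub>R V s + B s *\<^sub>R U s"
    and T_coeff: "\<And>s. s \<in> I \<Longrightarrow> A s * kg s + B s * kn s = 1"
    and U_coeff: "\<And>s. s \<in> I \<Longrightarrow> A s * tg s + B' s = 0"
    and reg: "regular_curve I \<gamma>"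
  shows "general_helix I \<gamma> \<longleftrightarrow> rel_normal_slant_helix I V"
proof -
  define f where "f s = vector_derivative \<gamma> (at s) \<bullet> V s" for s
  have \<gamma>': "(\<gamma> has_vector_derivative f s *\<^sub>R V s) (at s)" if "s \<in> I" for s
    using darboux_offset_curve_derivative_along_V[OF I(1) frame B \<gamma>_eq T_coeff U_coeff _ that] reg that
    unfolding f_def regular_curve_def by blast
  have "f s \<noteq> 0" if "s \<in> I" for s
    using vector_derivative_at[OF \<gamma>'[OF that]] reg that unfolding regular_curve_def by force
  with unit_tangent_eq_signed_field[OF I(1) is_interval_connected[OF I(2)]
      darboux_frame_continuous_on_V[OF frame] darboux_frame_V_orthonormal(1)[OF frame] \<gamma>']
  obtain \<sigma> where "\<bar>\<sigma>\<bar> = 1" "\<And>s. s \<in> I \<Longrightarrow>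
      vector_derivative \<gamma> (at s) /\<^sub>R norm (vector_derivative \<gamma> (at s)) = \<sigma> *\<^sub>R V s"
    by blast
  then show ?thesis
    by (rule general_helix_iff_rel_normal_slant_helix_if_unit_tangent[OF reg])
qed

lemma general_helix_iff_rel_normal_slant_helix_geodesic_case:
  fixes \<alpha> T V U \<gamma> :: "real \<Rightarrow> vec3" and kg kn tg :: "real \<Rightarrow> real"
  assumes I: "open I" "is_interval I" and frame: "darboux_frame I \<alpha> T V U kg kn tg"
    and geodesic_case: "\<forall>s\<in>I. kg s = 0 \<and> kn s \<noteq> 0 \<and> tg s \<noteq> 0 \<and> kn differentiable (at s) \<and>
      \<gamma> s = \<alpha> s + (deriv kn s / ((kn s)\<^sup>2 * tg s)) *\<^sub>R V s + (1 / kn s) *\<^sub>R U s"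
    and reg: "regular_curve I \<gamma>"
  shows "general_helix I \<gamma> \<longleftrightarrow> rel_normal_slant_helix I V"
proof (rule general_helix_iff_rel_normal_slant_helix_if_offset[OF I frame _ _ _ _ reg,
      where A = "\<lambda>s. deriv kn s / ((kn s)\<^sup>2 * tg s)" and B = "\<lambda>s. 1 / kn s"
        and B' = "\<lambda>s. - deriv kn s / (kn s)\<^sup>2"])
  fix s assume "s \<in> I"
  then have s: "kg s = 0" "kn s \<noteq> 0" "tg s \<noteq> 0"
    "(kn has_real_derivative deriv kn s) (at s)"
    "\<gamma> s = \<alpha> s + (deriv kn s / ((kn s)\<^sup>2 * tg s)) *\<^sub>R V s + (1 / kn s) *\<^sub>R U s"
    using geodesic_case DERIV_deriv_iff_real_differentiable by auto
  show "((\<lambda>s. 1 / kn s) has_real_derivative - deriv kn s / (kn s)\<^sup>2) (at s)"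
    using s by (auto intro!: derivative_eq_intros simp: power2_eq_square)
  show "\<gamma> s = \<alpha> s + (deriv kn s / ((kn s)\<^sup>2 * tg s)) *\<^sub>R V s + (1 / kn s) *\<^sub>R U s"
    using s by blast
  show "deriv kn s / ((kn s)\<^sup>2 * tg s) * kg s + 1 / kn s * kn s = 1"
    using s by simp
  show "deriv kn s / ((kn s)\<^sup>2 * tg s) * tg s + - deriv kn s / (kn s)\<^sup>2 = 0"
    using s by simp
qed

lemma general_helix_iff_rel_normal_slant_helix_nongeodesic_case:
  fixes \<alpha> T V U \<gamma> :: "real \<Rightarrow> vec3" and kg kn tg \<psi> \<Phi> :: "real \<Rightarrow> real"
  assumes I: "open I" "is_interval I" and frame: "darboux_frame I \<alpha> T V U kg kn tg"
    and nongeodesic_case: "\<forall>s\<in>I. kg s \<noteq> 0 \<and>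
      (\<psi> has_real_derivative (kn s * tg s / kg s)) (at s) \<and>
      (\<Phi> has_real_derivative (exp (- \<psi> s) * tg s / kg s)) (at s) \<and>
      \<gamma> s = \<alpha> s + (kn s / kg s * exp (\<psi> s) * (\<Phi> s - c3) + 1 / kg s) *\<^sub>R V s
        + (exp (\<psi> s) * (c3 - \<Phi> s)) *\<^sub>R U s"
    and reg: "regular_curve I \<gamma>"
  shows "general_helix I \<gamma> \<longleftrightarrow> rel_normal_slant_helix I V"
proof (rule general_helix_iff_rel_normal_slant_helix_if_offset[OF I frame _ _ _ _ reg,
      where A = "\<lambda>s. kn s / kg s * exp (\<psi> s) * (\<Phi> s - c3) + 1 / kg s"
        and B = "\<lambda>s. exp (\<psi> s) * (c3 - \<Phi> s)"
        and B' = "\<lambda>s. exp (\<psi> s) * (c3 - \<Phi> s) * kn s * tg s / kg s - tg s / kg s"])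
  fix s assume "s \<in> I"
  then have s: "kg s \<noteq> 0"
    "(\<psi> has_real_derivative (kn s * tg s / kg s)) (at s)"
    "(\<Phi> has_real_derivative (exp (- \<psi> s) * tg s / kg s)) (at s)"
    "\<gamma> s = \<alpha> s + (kn s / kg s * exp (\<psi> s) * (\<Phi> s - c3) + 1 / kg s) *\<^sub>R V s
      + (exp (\<psi> s) * (c3 - \<Phi> s)) *\<^sub>R U s"
    using nongeodesic_case by auto
  have exp_cancel: "exp (\<psi> s) * exp (- \<psi> s) = 1"
    by (simp add: exp_minus)
  show "((\<lambda>s. exp (\<psi> s) * (c3 - \<Phi> s)) has_real_derivative
      exp (\<psi> s) * (c3 - \<Phi> s) * kn s * tg s / kg s - tg s / kg s) (at s)"
    using s(1) exp_cancel by (auto intro!: derivative_eq_intros s(2,3) simp: field_simps)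
  show "\<gamma> s = \<alpha> s + (kn s / kg s * exp (\<psi> s) * (\<Phi> s - c3) + 1 / kg s) *\<^sub>R V s
      + (exp (\<psi> s) * (c3 - \<Phi> s)) *\<^sub>R U s"
    using s(4) .
  show "(kn s / kg s * exp (\<psi> s) * (\<Phi> s - c3) + 1 / kg s) * kg s
      + exp (\<psi> s) * (c3 - \<Phi> s) * kn s = 1"
    using s(1) by (simp add: field_simps)
  show "(kn s / kg s * exp (\<psi> s) * (\<Phi> s - c3) + 1 / kg s) * tg s
      + (exp (\<psi> s) * (c3 - \<Phi> s) * kn s * tg s / kg s - tg s / kg s) = 0"
    using s(1) by (simp add: field_simps)
qed

theorem theorem3p14:
  fixes I :: "real set" and \<alpha> T V U \<gamma> :: "real \<Rightarrow> vec3" and kg kn tg :: "real \<Rightarrow> real"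
  assumes I: "open I" "is_interval I"
    and frame: "darboux_frame I \<alpha> T V U kg kn tg"
    and cases:
      "(\<forall>s\<in>I. kg s = 0 \<and> kn s \<noteq> 0 \<and> tg s \<noteq> 0 \<and> kn differentiable (at s) \<and>
          \<gamma> s = \<alpha> s + (deriv kn s / ((kn s)\<^sup>2 * tg s)) *\<^sub>R V s + (1 / kn s) *\<^sub>R U s)
       \<or>
       (\<exists>c3 \<psi> \<Phi>. \<forall>s\<in>I. kg s \<noteq> 0 \<and>
          (\<psi> has_real_derivative (kn s * tg s / kg s)) (at s) \<and>
          (\<Phi> has_real_derivative (exp (- \<psi> s) * tg s / kg s)) (at s) \<and>
          \<gamma> s = \<alpha> s + (kn s / kg s * exp (\<psi> s) * (\<Phi> s - c3) + 1 / kg s) *\<^sub>R V s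
                + (exp (\<psi> s) * (c3 - \<Phi> s)) *\<^sub>R U s)"
    and reg: "regular_curve I \<gamma>"
  shows "general_helix I \<gamma> \<longleftrightarrow> rel_normal_slant_helix I V"
  using cases general_helix_iff_rel_normal_slant_helix_geodesic_case[OF I frame _ reg]
    general_helix_iff_rel_normal_slant_helix_nongeodesic_case[OF I frame _ reg]
  by blast

end
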